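(* A regulator splits new bandwidth $B\ge 0$ between two SPs as $B_1^n,B_2^n\ge0$ with $B_1^n+B_2^n=B$; SP $i$ then has total bandwidth $B_i=B_i^o+B_i^n$ and must satisfy $B_{i,S}\ge B_{i,S}^0:=B_i^n$. For this split, let $\mathrm{SW}_{\mathrm{wo}}^*$ be the maximal social welfare over all allocations with $B_{i,S}\in[0,B_i]$; $\mathrm{SW}_{\mathrm{w}}^*$ the maximal social welfare over allocations with $B_{i,S}\in[B_i^n,B_i]$; and $\mathrm{SW}_{\mathrm{w}}^{\mathrm{NE}}$ the social welfare at the unique Nash equilibrium of the constrained two-SP bandwidth game. Let $T=\frac{(B_1^o+B_2^o)N_f\epsilon}{N_m}$. Then: 1. If $B>T$, then $\mathrm{SW}_{\mathrm{w}}^{\mathrm{NE}}\le\mathrm{SW}_{\mathrm{w}}^*<\mathrm{SW}_{\mathrm{wo}}^*$, and $\mathrm{SW}_{\mathrm{w}}^{\mathrm{NE}}=\mathrm{SW}_{\mathrm{w}}^*$ if and only if $\frac{\partial S_i}{\partial B_{i,S}}\le 0$ for $i=1,2$ when evaluated at the profile $(B_{1,S},B_{2,S})=(B_1^n,B_2^n)$, i.e. iff for $i=1,2$ $$\lambda_S(R_S^0)^{-\alpha}-(R_M^0)^{-\alpha}-\frac{\alpha\lambda_S^2B_i^nR_0}{N_f}(R_S^0)^{-\alpha-1}+\frac{\alpha B_i^oR_0}{N_m}(R_M^0)^{-\alpha-1}\le 0,$$ where $R_S^0=\frac{\lambda_S(B_1^n+B_2^n)R_0}{N_f}$ and $R_M^0=\frac{(B_1^o+B_2^o)R_0}{N_m}$.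 2. If $B\le T$, then $\mathrm{SW}_{\mathrm{w}}^{\mathrm{NE}}\le\mathrm{SW}_{\mathrm{w}}^*=\mathrm{SW}_{\mathrm{wo}}^*$, and $\mathrm{SW}_{\mathrm{w}}^{\mathrm{NE}}=\mathrm{SW}_{\mathrm{wo}}^*$ if and only if $$B_1^n\in\Big[B-\frac{B_2^oN_f\epsilon}{N_m},\ \frac{B_1^oN_f\epsilon}{N_m}\Big],\qquad B_2^n=B-B_1^n.$$
   Context: Fixed parameters: $\alpha\in(0,1)$; densities $N_m>0$ (mobile users) and $N_f>0$ (fixed users); spectral efficiency $R_0>0$; common small-cell density $\lambda_S>1$ (macro density normalized to 1); initial bandwidths $B_1^o,B_2^o>0$, usable for either macro- or small-cells; the new bandwidth may be used only for small-cells. Utility $u(r)=\frac{r^{1-\alpha}}{1-\alpha}$, $u'(r)=r^{-\alpha}$. Let $\epsilon=\lambda_S^{1/\alpha-1}$. Two-SP bandwidth game with totals $B_i$ and lower bounds $B_{i,S}^0$: SP $i$ chooses $B_{i,S}\in[B_{i,S}^0,B_i]$, $B_{i,M}=B_i-B_{i,S}$; average rates at market-clearing prices (mobile users on macro-cells, fixed users on small-cells) are $R_S=\frac{\lambda_S(B_{1,S}+B_{2,S})R_0}{N_f}$, $R_M=\frac{(B_{1,M}+B_{2,M})R_0}{N_m}$; SP $i$'s revenue is $S_i=R_0B_{i,M}R_M^{-\alpha}+R_0\lambda_SB_{i,S}R_S^{-\alpha}$ (zero-bandwidth terms are $0$). This game has a unique pure Nash equilibrium. Social welfare of a profile is $\mathrm{SW}=N_m\,u(R_M)+N_f\,u(R_S)$.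 *)

theory Defs
  imports "HOL-Analysis.Analysis"
begin

definition util :: "real \<Rightarrow> real \<Rightarrow> real" where
  "util \<alpha> r = r powr (1 - \<alpha>) / (1 - \<alpha>)"

definition rateS :: "real \<Rightarrow> real \<Rightarrow> real \<Rightarrow> real \<Rightarrow> real \<Rightarrow> real" where
  "rateS Nf R0 lam x1 x2 = lam * (x1 + x2) * R0 / Nf"

definition rateM :: "real \<Rightarrow> real \<Rightarrow> real \<Rightarrow> real \<Rightarrow> real \<Rightarrow> real \<Rightarrow> real" where
  "rateM Nm R0 B1 B2 x1 x2 = ((B1 - x1) + (B2 - x2)) * R0 / Nm"

definition SW :: "real \<Rightarrow> real \<Rightarrow> real \<Rightarrow> real \<Rightarrow> real \<Rightarrow> real \<Rightarrow> real \<Rightarrow> real \<Rightarrow> real \<Rightarrow> real" where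
  "SW \<alpha> Nm Nf R0 lam B1 B2 x1 x2 =
     Nm * util \<alpha> (rateM Nm R0 B1 B2 x1 x2) + Nf * util \<alpha> (rateS Nf R0 lam x1 x2)"

definition revenue :: "real \<Rightarrow> real \<Rightarrow> real \<Rightarrow> real \<Rightarrow> real \<Rightarrow> real \<Rightarrow> real \<Rightarrow> real \<Rightarrow> real \<Rightarrow> real" where
  "revenue \<alpha> Nm Nf R0 lam Bi xi Bj xj =
     (if Bi - xi = 0 then 0 else R0 * (Bi - xi) * (rateM Nm R0 Bi Bj xi xj) powr (- \<alpha>))
   + (if xi = 0 then 0 else R0 * lam * xi * (rateS Nf R0 lam xi xj) powr (- \<alpha>))"

definition is_NE :: "real \<Rightarrow> real \<Rightarrow> real \<Rightarrow> real \<Rightarrow> real \<Rightarrow> real \<Rightarrow> real \<Rightarrow> real \<Rightarrow> real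
    \<Rightarrow> real \<Rightarrow> real \<Rightarrow> bool" where
  "is_NE \<alpha> Nm Nf R0 lam B1 B2 L1 L2 x1 x2 \<longleftrightarrow>
     x1 \<in> {L1..B1} \<and> x2 \<in> {L2..B2} \<and>
     (\<forall>y \<in> {L1..B1}. revenue \<alpha> Nm Nf R0 lam B1 y B2 x2 \<le> revenue \<alpha> Nm Nf R0 lam B1 x1 B2 x2) \<and>
     (\<forall>y \<in> {L2..B2}. revenue \<alpha> Nm Nf R0 lam B2 y B1 x1 \<le> revenue \<alpha> Nm Nf R0 lam B2 x2 B1 x1)"

definition optSW :: "real \<Rightarrow> real \<Rightarrow> real \<Rightarrow> real \<Rightarrow> real \<Rightarrow> real \<Rightarrow> real \<Rightarrow> real \<Rightarrow> real \<Rightarrow> real" where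
  "optSW \<alpha> Nm Nf R0 lam B1 B2 L1 L2 =
     Sup {SW \<alpha> Nm Nf R0 lam B1 B2 x1 x2 | x1 x2. x1 \<in> {L1..B1} \<and> x2 \<in> {L2..B2}}"

end

theory Submission
  imports Defs
begin

text \<open>Social welfare depends on a profile only through the aggregate small-cell bandwidth
  \<open>s\<close>, and is strictly concave in \<open>s\<close>; it is maximised at the proportional share
  \<open>s\<^sup>* = opt_share * (B\<^sub>1 + B\<^sub>2)\<close>, where \<open>\<lambda>\<^sub>S R\<^sub>S\<^sup>-\<^sup>\<alpha> = R\<^sub>M\<^sup>-\<^sup>\<alpha>\<close>.
  The threshold \<open>T\<close> is exactly the \<open>B\<close> at which the lower bound \<open>B\<close> on the aggregate reaches
  \<open>s\<^sup>*\<close>, so for \<open>B > T\<close> the constrained optimum is the lower corner and for \<open>B \<le> T\<close>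
  it equals the unconstrained one.
  At a Nash equilibrium both SPs satisfy the first-order (KKT) conditions; the equilibrium is
  interior in the aggregate because revenue grows like \<open>h\<^sup>1\<^sup>-\<^sup>\<alpha>\<close> when leaving the boundary.
  Each marginal revenue is a difference of two Cournot-type marginals of
  \<open>m\<^sub>i (m\<^sub>1 + m\<^sub>2)\<^sup>-\<^sup>\<alpha>\<close>, which are strictly monotone (Rosen's diagonal strict
  concavity); hence a KKT profile is unique, and the equality criteria follow by testing the lower
  corner, respectively the proportional optimum, as candidate KKT profile.\<close>

lemma util_strictly_below_tangent:
  fixes \<alpha> r r0 :: real
  assumes \<alpha>: "0 < \<alpha>" "\<alpha> < 1" and r0: "r0 > 0" and r: "r \<ge> 0" "r \<noteq> r0"
  shows "util \<alpha> r < util \<alpha> r0 + r0 powr - \<alpha> * (r - r0)"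
proof -
  define g where "g t = util \<alpha> r0 + r0 powr - \<alpha> * (t - r0) - util \<alpha> t" for t
  have g_deriv: "DERIV g t :> r0 powr - \<alpha> - t powr - \<alpha>" if "t > 0" for t
  proof -
    have "DERIV g t :> r0 powr - \<alpha> - (1 - \<alpha>) * t powr (1 - \<alpha> - 1) / (1 - \<alpha>)"
      unfolding g_def util_def using that \<alpha> by (auto intro!: derivative_eq_intros)
    then show ?thesis using \<alpha> by simp
  qed
  have g_cont: "continuous_on {r..r0} g" "continuous_on {r0..r} g"
    unfolding g_def util_def using r r0 \<alpha>
    by (auto intro!: continuous_intros continuous_on_powr')
  show ?thesis
  proof (cases "r0 < r")
    case True
    have "g r0 < g r"
    proof (rule DERIV_pos_imp_increasing_open[OF True _ g_cont(2)])
      fix t assume t: "r0 < t" "t < r"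
      have "t powr - \<alpha> < r0 powr - \<alpha>" using t r0 \<alpha> by (intro powr_less_mono2_neg) auto
      then show "\<exists>y. DERIV g t :> y \<and> 0 < y" using g_deriv[of t] t r0 by auto
    qed
    then show ?thesis by (simp add: g_def)
  next
    case False
    then have "r < r0" using r by auto
    then have "g r0 < g r"
    proof (rule DERIV_neg_imp_decreasing_open[OF _ _ g_cont(1)])
      fix t assume t: "r < t" "t < r0"
      have "r0 powr - \<alpha> < t powr - \<alpha>" using t r \<alpha> by (intro powr_less_mono2_neg) auto
      then show "\<exists>y. DERIV g t :> y \<and> y < 0" using g_deriv[of t] t r by auto
    qed
    then show ?thesis by (simp add: g_def)
  qed
qed

lemma power_gain_beats_differentiable_loss:
  fixes G :: "real \<Rightarrow> real"
  assumes G: "DERIV G 0 :> D" and c: "c > 0" and b: "0 < b" "b < 1" and \<delta>: "\<delta> > 0"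
  shows "\<exists>h. 0 < h \<and> h < \<delta> \<and> G 0 < c * h powr b + G h"
proof -
  define K where "K = \<bar>D\<bar> + 1"
  have K: "K > 0" "- K < D" by (auto simp: K_def)
  have "((\<lambda>h. (G h - G 0) / h) \<longlongrightarrow> D) (at_right 0)"
    using G unfolding DERIV_def by (auto intro: tendsto_mono[OF at_le])
  then have quot: "\<forall>\<^sub>F h in at_right 0. - K < (G h - G 0) / h"
    using K(2) by (rule order_tendstoD(1))
  have "((\<lambda>h. h powr (1 - b)) \<longlongrightarrow> 0 powr (1 - b)) (at_right 0)"
    using b by (intro tendsto_intros) (auto simp: eventually_at_right_field intro: exI[of _ 1])
  then have small: "\<forall>\<^sub>F h in at_right 0. h powr (1 - b) < c / K"
    using b c K by (intro order_tendstoD) auto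
  have near: "\<forall>\<^sub>F h in at_right 0. 0 < h \<and> h < \<delta>"
    using \<delta> eventually_at_right_field by blast
  obtain h where h: "0 < h" "h < \<delta>" "- K < (G h - G 0) / h" "h powr (1 - b) < c / K"
    using eventually_happens'[OF _ eventually_conj[OF near eventually_conj[OF quot small]]] by auto
  have "G 0 - G h < K * h" using h(1,3) by (simp add: field_simps)
  also have "K * h = K * h powr (1 - b) * h powr b"
    using h(1) by (simp add: mult.assoc powr_add[symmetric])
  also have "\<dots> < c * h powr b" using h(1,4) K by (simp add: field_simps)
  finally show ?thesis using h(1,2) by (intro exI[of _ h]) auto
qed

definition kkt_interval :: "real \<Rightarrow> real \<Rightarrow> real \<Rightarrow> real \<Rightarrow> bool" where
  "kkt_interval L U x d \<longleftrightarrow> L \<le> x \<and> x \<le> U \<and> (L < x \<longrightarrow> 0 \<le> d) \<and> (x < U \<longrightarrow> d \<le> 0)"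

lemma kkt_interval_if_maximum:
  fixes f :: "real \<Rightarrow> real"
  assumes f: "DERIV f x :> d" and x: "L \<le> x" "x \<le> U" and max: "\<forall>y\<in>{L..U}. f y \<le> f x"
  shows "kkt_interval L U x d"
  unfolding kkt_interval_def
proof (intro conjI impI x)
  assume "L < x"
  show "0 \<le> d"
  proof (rule ccontr)
    assume "\<not> 0 \<le> d"
    then obtain \<delta> where "\<delta> > 0" "\<forall>h>0. h < \<delta> \<longrightarrow> f x < f (x - h)"
      using DERIV_neg_dec_left[OF f] by force
    moreover define h where "h = min \<delta> (x - L) / 2"
    ultimately have "f x < f (x - h)" "x - h \<in> {L..U}" using \<open>L < x\<close> x by auto
    then show False using max by force
  qed
next
  assume "x < U"
  show "d \<le> 0"
  proof (rule ccontr)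
    assume "\<not> d \<le> 0"
    then obtain \<delta> where "\<delta> > 0" "\<forall>h>0. h < \<delta> \<longrightarrow> f x < f (x + h)"
      using DERIV_pos_inc_right[OF f] by force
    moreover define h where "h = min \<delta> (U - x) / 2"
    ultimately have "f x < f (x + h)" "x + h \<in> {L..U}" using \<open>x < U\<close> x by auto
    then show False using max by force
  qed
qed

lemma kkt_interval_monotone:
  assumes "kkt_interval L U x d" "kkt_interval L U z e"
  shows "0 \<le> (x - z) * (d - e)"
proof -
  consider "x < z" | "x = z" | "z < x" by linarith
  then show ?thesis
  proof cases
    case 1
    then have "d \<le> 0" "0 \<le> e" using assms unfolding kkt_interval_def by auto
    then show ?thesis using 1 by (intro mult_nonpos_nonpos) auto
  next
    case 3
    then have "0 \<le> d" "e \<le> 0" using assms unfolding kkt_interval_def by auto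
    then show ?thesis using 3 by simp
  qed simp
qed

lemma kkt_interval_lower_iff: "L < U \<Longrightarrow> kkt_interval L U L d \<longleftrightarrow> d \<le> 0"
  by (auto simp: kkt_interval_def)

text \<open>The partial derivative of \<open>m\<^sub>1 (m\<^sub>1 + m\<^sub>2)\<^sup>-\<^sup>\<alpha>\<close> in \<open>m\<^sub>1\<close>,
  written with \<open>a = m\<^sub>1 + m\<^sub>2\<close>.\<close>
definition cournot_marginal :: "real \<Rightarrow> real \<Rightarrow> real \<Rightarrow> real" where
  "cournot_marginal \<alpha> a m = a powr - \<alpha> - \<alpha> * m * a powr (- \<alpha> - 1)"

lemma powr_diff_one_mult: "(a::real) > 0 \<Longrightarrow> a powr (e - 1) * a = a powr e"
  by (simp add: powr_diff)

lemma cournot_marginal_proportional: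
  "(a::real) > 0 \<Longrightarrow> cournot_marginal \<alpha> a (r * a) = (1 - \<alpha> * r) * a powr - \<alpha>"
  using powr_diff_one_mult[of a "- \<alpha>"]
  by (simp add: cournot_marginal_def algebra_simps)

lemma cournot_marginal_sum:
  "(a::real) > 0 \<Longrightarrow> m1 + m2 = a \<Longrightarrow>
     cournot_marginal \<alpha> a m1 + cournot_marginal \<alpha> a m2 = (2 - \<alpha>) * a powr - \<alpha>"
proof -
  assume a: "a > 0" and m: "m1 + m2 = a"
  have "cournot_marginal \<alpha> a m1 + cournot_marginal \<alpha> a m2
      = 2 * a powr - \<alpha> - \<alpha> * ((m1 + m2) * a powr (- \<alpha> - 1))"
    by (simp add: cournot_marginal_def algebra_simps)
  also have "(m1 + m2) * a powr (- \<alpha> - 1) = a powr - \<alpha>"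
    using powr_diff_one_mult[OF a, of "- \<alpha>"] m by (simp add: mult.commute)
  finally show ?thesis by (simp add: algebra_simps)
qed

lemma cournot_marginal_deriv:
  fixes A M :: "real \<Rightarrow> real"
  assumes A: "DERIV A t :> dA" and M: "DERIV M t :> dM" and pos: "A t > 0"
  shows "DERIV (\<lambda>t. cournot_marginal \<alpha> (A t) (M t)) t :>
           \<alpha> * A t powr (- \<alpha> - 2) * ((\<alpha> + 1) * M t * dA - A t * dA - A t * dM)"
proof -
  have "DERIV (\<lambda>t. cournot_marginal \<alpha> (A t) (M t)) t :>
      - \<alpha> * A t powr (- \<alpha> - 1) * dA
      - \<alpha> * (dM * A t powr (- \<alpha> - 1) + M t * ((- \<alpha> - 1) * A t powr (- \<alpha> - 2) * dA))"
    unfolding cournot_marginal_def using A M pos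
    by (auto intro!: derivative_eq_intros simp: algebra_simps)
  moreover have "A t powr (- \<alpha> - 1) = A t powr (- \<alpha> - 2) * A t"
    using powr_diff_one_mult[OF pos, of "- \<alpha> - 1"] by (simp add: diff_diff_eq)
  ultimately show ?thesis by (simp add: algebra_simps)
qed

lemma cournot_form_pos:
  fixes \<alpha> m1 m2 d1 d2 :: real
  assumes \<alpha>: "0 < \<alpha>" "\<alpha> < 1" and m: "m1 \<ge> 0" "m2 \<ge> 0" "m1 + m2 > 0" and d: "d1 \<noteq> 0 \<or> d2 \<noteq> 0"
  shows "(m1 + m2) * ((d1 + d2)\<^sup>2 + d1\<^sup>2 + d2\<^sup>2) - (\<alpha> + 1) * (d1 + d2) * (m1 * d1 + m2 * d2) > 0"
proof -
  define c1 where "c1 = (1 - \<alpha>) * (d1 + d2 / 2)\<^sup>2 + (2 - (1 - \<alpha>) / 4) * d2\<^sup>2"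
  define c2 where "c2 = (1 - \<alpha>) * (d2 + d1 / 2)\<^sup>2 + (2 - (1 - \<alpha>) / 4) * d1\<^sup>2"
  have "c1 > 0"
  proof (cases "d2 = 0")
    case True
    then show ?thesis using d \<alpha> by (simp add: c1_def)
  next
    case False
    then show ?thesis using \<alpha> unfolding c1_def
      by (intro add_nonneg_pos mult_nonneg_nonneg mult_pos_pos) auto
  qed
  moreover have "c2 > 0"
  proof (cases "d1 = 0")
    case True
    then show ?thesis using d \<alpha> by (simp add: c2_def)
  next
    case False
    then show ?thesis using \<alpha> unfolding c2_def
      by (intro add_nonneg_pos mult_nonneg_nonneg mult_pos_pos) auto
  qed
  moreover have "(m1 + m2) * ((d1 + d2)\<^sup>2 + d1\<^sup>2 + d2\<^sup>2) - (\<alpha> + 1) * (d1 + d2) * (m1 * d1 + m2 * d2)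
      = m1 * c1 + m2 * c2"
    by (simp add: c1_def c2_def power2_eq_square algebra_simps)
  moreover have "m1 > 0 \<or> m2 > 0" using m by auto
  ultimately show ?thesis using m
    by (auto intro: add_pos_nonneg add_nonneg_pos)
qed

lemma cournot_marginal_strictly_monotone:
  fixes \<alpha> m1 m2 n1 n2 :: real
  assumes \<alpha>: "0 < \<alpha>" "\<alpha> < 1"
    and nonneg: "0 \<le> m1" "0 \<le> m2" "0 \<le> n1" "0 \<le> n2" and pos: "0 < m1 + m2" "0 < n1 + n2"
    and ne: "m1 \<noteq> n1 \<or> m2 \<noteq> n2"
  shows "(n1 - m1) * (cournot_marginal \<alpha> (n1 + n2) n1 - cournot_marginal \<alpha> (m1 + m2) m1)
       + (n2 - m2) * (cournot_marginal \<alpha> (n1 + n2) n2 - cournot_marginal \<alpha> (m1 + m2) m2) < 0"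
proof -
  define d1 d2 where "d1 = n1 - m1" and "d2 = n2 - m2"
  define M1 M2 where "M1 t = m1 + t * d1" and "M2 t = m2 + t * d2" for t :: real
  define h where "h t = d1 * cournot_marginal \<alpha> (M1 t + M2 t) (M1 t)
                     + d2 * cournot_marginal \<alpha> (M1 t + M2 t) (M2 t)" for t
  have "h 1 < h 0"
  proof (rule DERIV_neg_imp_decreasing[of 0 1])
    fix t :: real assume t: "0 \<le> t" "t \<le> 1"
    have M_conv: "M1 t = (1 - t) * m1 + t * n1" "M2 t = (1 - t) * m2 + t * n2"
      by (simp_all add: M1_def M2_def d1_def d2_def algebra_simps)
    have M_nonneg: "0 \<le> M1 t" "0 \<le> M2 t"
      unfolding M_conv using t nonneg by simp_all
    have A_pos: "0 < M1 t + M2 t"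
    proof (cases "t = 1")
      case False
      have "0 < (1 - t) * (m1 + m2)" "0 \<le> t * (n1 + n2)" using t pos False by auto
      then show ?thesis unfolding M_conv by (simp add: algebra_simps)
    qed (use pos in \<open>simp add: M1_def M2_def d1_def d2_def\<close>)
    have D: "DERIV M1 t :> d1" "DERIV M2 t :> d2" "DERIV (\<lambda>t. M1 t + M2 t) t :> d1 + d2"
      unfolding M1_def M2_def by (auto intro!: derivative_eq_intros)
    define P where "P = \<alpha> * (M1 t + M2 t) powr (- \<alpha> - 2)"
    define Q where "Q = (M1 t + M2 t) * ((d1 + d2)\<^sup>2 + d1\<^sup>2 + d2\<^sup>2)
                      - (\<alpha> + 1) * (d1 + d2) * (M1 t * d1 + M2 t * d2)"
    have "DERIV h t :>
        d1 * (P * ((\<alpha> + 1) * M1 t * (d1 + d2) - (M1 t + M2 t) * (d1 + d2) - (M1 t + M2 t) * d1))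
      + d2 * (P * ((\<alpha> + 1) * M2 t * (d1 + d2) - (M1 t + M2 t) * (d1 + d2) - (M1 t + M2 t) * d2))"
      unfolding h_def P_def
      by (intro DERIV_add DERIV_cmult cournot_marginal_deriv[where A = "\<lambda>t. M1 t + M2 t"] D A_pos)
    then have "DERIV h t :> - P * Q"
      by (rule DERIV_cong) (simp add: Q_def power2_eq_square algebra_simps)
    moreover have "0 < P" using \<alpha> A_pos by (simp add: P_def)
    moreover have "0 < Q"
      unfolding Q_def using cournot_form_pos[OF \<alpha> M_nonneg A_pos] ne by (auto simp: d1_def d2_def)
    ultimately show "\<exists>y. DERIV h t :> y \<and> y < 0"
      by (metis mult_pos_pos neg_less_0_iff_less mult_minus_left)
  qed simp
  then show ?thesis by (simp add: h_def M1_def M2_def d1_def d2_def algebra_simps)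
qed

lemma optSW_eqI:
  assumes "w1 \<in> {L1..B1}" "w2 \<in> {L2..B2}"
    and "\<And>y1 y2. y1 \<in> {L1..B1} \<Longrightarrow> y2 \<in> {L2..B2} \<Longrightarrow>
           SW \<alpha> Nm Nf R0 lam B1 B2 y1 y2 \<le> SW \<alpha> Nm Nf R0 lam B1 B2 w1 w2"
  shows "optSW \<alpha> Nm Nf R0 lam B1 B2 L1 L2 = SW \<alpha> Nm Nf R0 lam B1 B2 w1 w2"
  unfolding optSW_def using assms by (intro cSup_eq_maximum) auto

lemma revenue_eq:
  "revenue \<alpha> Nm Nf R0 lam Bi y Bj yj =
     R0 * (Bi - y) * rateM Nm R0 Bi Bj y yj powr - \<alpha> + R0 * lam * y * rateS Nf R0 lam y yj powr - \<alpha>"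
  by (simp add: revenue_def)

lemma mult_scaled_powr_neg:
  "(h::real) > 0 \<Longrightarrow> k > 0 \<Longrightarrow> h * (h * k) powr - a = k powr - a * h powr (1 - a)"
  by (simp add: powr_mult powr_diff powr_minus field_simps)

locale bandwidth_market =
  fixes \<alpha> Nm Nf R0 lam :: real
  assumes alpha: "0 < \<alpha>" "\<alpha> < 1"
    and Nm_pos: "0 < Nm" and Nf_pos: "0 < Nf" and R0_pos: "0 < R0" and lam_pos: "0 < lam"
begin

abbreviation welfare where "welfare \<equiv> SW \<alpha> Nm Nf R0 lam"

abbreviation opt_welfare where "opt_welfare \<equiv> optSW \<alpha> Nm Nf R0 lam"

definition agg_welfare :: "real \<Rightarrow> real \<Rightarrow> real" where
  "agg_welfare C s = Nm * util \<alpha> ((C - s) * R0 / Nm) + Nf * util \<alpha> (lam * s * R0 / Nf)"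

definition welfare_slope :: "real \<Rightarrow> real \<Rightarrow> real" where
  "welfare_slope C s = lam * (lam * s * R0 / Nf) powr - \<alpha> - ((C - s) * R0 / Nm) powr - \<alpha>"

definition eps :: real where
  "eps = lam powr (1 / \<alpha> - 1)"

definition opt_share :: real where
  "opt_share = eps * Nf / (Nm + eps * Nf)"

lemma welfare_eq_agg_welfare: "welfare B1 B2 y1 y2 = agg_welfare (B1 + B2) (y1 + y2)"
proof -
  have "(B1 - y1) + (B2 - y2) = (B1 + B2) - (y1 + y2)" by simp
  then show ?thesis by (simp only: SW_def agg_welfare_def rateM_def rateS_def)
qed

lemma agg_welfare_strictly_below_tangent:
  assumes y: "0 \<le> y" "y \<le> C" and z: "0 < z" "z < C" and "y \<noteq> z"
  shows "agg_welfare C y < agg_welfare C z + R0 * (y - z) * welfare_slope C z"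
proof -
  define M0 S0 where "M0 = (C - z) * R0 / Nm" and "S0 = lam * z * R0 / Nf"
  have "M0 > 0" "S0 > 0" using z Nm_pos Nf_pos R0_pos lam_pos by (simp_all add: M0_def S0_def)
  have "Nm * util \<alpha> ((C - y) * R0 / Nm) < Nm * (util \<alpha> M0 + M0 powr - \<alpha> * ((C - y) * R0 / Nm - M0))"
    using util_strictly_below_tangent[OF alpha \<open>M0 > 0\<close>, of "(C - y) * R0 / Nm"] y \<open>y \<noteq> z\<close>
      Nm_pos R0_pos by (simp add: M0_def)
  moreover have "Nf * util \<alpha> (lam * y * R0 / Nf) < Nf * (util \<alpha> S0 + S0 powr - \<alpha> * (lam * y * R0 / Nf - S0))"
    using util_strictly_below_tangent[OF alpha \<open>S0 > 0\<close>, of "lam * y * R0 / Nf"] y \<open>y \<noteq> z\<close>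
      Nf_pos R0_pos lam_pos by (simp add: S0_def)
  moreover have "Nm * (M0 powr - \<alpha> * ((C - y) * R0 / Nm - M0)) = - R0 * (y - z) * M0 powr - \<alpha>"
    "Nf * (S0 powr - \<alpha> * (lam * y * R0 / Nf - S0)) = R0 * (y - z) * lam * S0 powr - \<alpha>"
    using Nm_pos Nf_pos by (simp_all add: M0_def S0_def field_simps)
  ultimately show ?thesis
    unfolding agg_welfare_def welfare_slope_def M0_def[symmetric] S0_def[symmetric]
    by (simp add: algebra_simps)
qed

lemma eps_pos: "0 < eps"
  using lam_pos by (simp add: eps_def)

lemma opt_share_bounds: "0 < opt_share" "opt_share < 1"
proof -
  have "0 < eps * Nf" using eps_pos Nf_pos by simp
  then show "0 < opt_share" "opt_share < 1" using Nm_pos by (simp_all add: opt_share_def)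
qed

lemma le_opt_share_iff: "L \<le> opt_share * (Bo + L) \<longleftrightarrow> L \<le> Bo * Nf * eps / Nm"
proof -
  have den: "0 < Nm + eps * Nf" using eps_pos Nf_pos Nm_pos by (simp add: add_pos_pos)
  have "L \<le> opt_share * (Bo + L) \<longleftrightarrow> L * (Nm + eps * Nf) \<le> eps * Nf * (Bo + L)"
    using den by (simp add: opt_share_def pos_le_divide_eq field_simps)
  also have "\<dots> \<longleftrightarrow> L * Nm \<le> Bo * Nf * eps" by (simp add: algebra_simps)
  also have "\<dots> \<longleftrightarrow> L \<le> Bo * Nf * eps / Nm" using Nm_pos by (simp add: pos_le_divide_eq)
  finally show ?thesis .
qed

lemma welfare_slope_opt_share:
  assumes "0 < C"
  shows "welfare_slope C (opt_share * C) = 0"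
proof -
  define RM where "RM = (C - opt_share * C) * R0 / Nm"
  have "0 < RM" using assms opt_share_bounds Nm_pos R0_pos by (simp add: RM_def)
  have den: "Nm + eps * Nf \<noteq> 0" using eps_pos Nf_pos Nm_pos by (smt (verit) mult_pos_pos)
  have lam_eps: "lam * eps = lam powr (1 / \<alpha>)"
    using lam_pos by (simp add: eps_def powr_diff)
  have "C - opt_share * C = C * Nm / (Nm + eps * Nf)"
    using den by (simp add: opt_share_def field_simps)
  then have "RM = C * R0 / (Nm + eps * Nf)"
    unfolding RM_def using Nm_pos by simp
  moreover have "lam * (opt_share * C) * R0 / Nf = lam * eps * (C * R0 / (Nm + eps * Nf))"
    using Nf_pos by (simp add: opt_share_def)
  ultimately have "lam * (opt_share * C) * R0 / Nf = lam * eps * RM"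
    by simp
  then have "lam * (opt_share * C) * R0 / Nf = lam powr (1 / \<alpha>) * RM"
    by (simp add: lam_eps)
  then have "lam * (lam * (opt_share * C) * R0 / Nf) powr - \<alpha> = lam * (lam powr (1 / \<alpha>)) powr - \<alpha> * RM powr - \<alpha>"
    using \<open>0 < RM\<close> lam_pos by (simp add: powr_mult)
  also have "\<dots> = RM powr - \<alpha>"
    using lam_pos alpha by (simp add: powr_powr powr_minus)
  finally show ?thesis by (simp add: welfare_slope_def RM_def)
qed

lemma welfare_slope_neg_above_opt:
  assumes "opt_share * C < s" "s < C"
  shows "welfare_slope C s < 0"
proof -
  have "0 < C" using assms opt_share_bounds by (smt (verit) mult_less_cancel_right2)
  define s0 where "s0 = opt_share * C"
  have "0 < s0" using \<open>0 < C\<close> opt_share_bounds by (simp add: s0_def)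
  have "lam * (lam * s * R0 / Nf) powr - \<alpha> < lam * (lam * s0 * R0 / Nf) powr - \<alpha>"
    using assms \<open>0 < s0\<close> alpha lam_pos Nf_pos R0_pos
    by (auto intro!: powr_less_mono2_neg divide_strict_right_mono simp: s0_def)
  moreover have "((C - s0) * R0 / Nm) powr - \<alpha> < ((C - s) * R0 / Nm) powr - \<alpha>"
    using assms alpha Nm_pos R0_pos
    by (auto intro!: powr_less_mono2_neg divide_strict_right_mono simp: s0_def)
  ultimately have "welfare_slope C s < welfare_slope C s0" by (simp add: welfare_slope_def)
  then show ?thesis using welfare_slope_opt_share[OF \<open>0 < C\<close>] by (simp add: s0_def)
qed

lemma agg_welfare_max_at_opt_share:
  assumes "0 \<le> y" "y \<le> C" "y \<noteq> opt_share * C"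
  shows "agg_welfare C y < agg_welfare C (opt_share * C)"
proof -
  have "0 < C" using assms opt_share_bounds by (cases "y = C") auto
  then show ?thesis
    using agg_welfare_strictly_below_tangent[OF assms(1,2) _ _ assms(3)] welfare_slope_opt_share
      opt_share_bounds by (simp add: mult_less_cancel_right2)
qed

lemma agg_welfare_max_at_lower_bound:
  assumes "opt_share * C < L" "L < C" "L \<le> y" "y \<le> C" "y \<noteq> L"
  shows "agg_welfare C y < agg_welfare C L"
proof -
  have "0 < L" using assms opt_share_bounds by (smt (verit) mult_less_cancel_right2 mult_nonneg_nonneg)
  have "R0 * (y - L) * welfare_slope C L \<le> 0"
    using welfare_slope_neg_above_opt[OF assms(1,2)] assms(3) R0_pos
    by (intro mult_nonneg_nonpos) auto
  then show ?thesis
    using agg_welfare_strictly_below_tangent[of y C L] assms \<open>0 < L\<close> by linarith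
qed

abbreviation payoff where "payoff \<equiv> revenue \<alpha> Nm Nf R0 lam"

abbreviation NE where "NE \<equiv> is_NE \<alpha> Nm Nf R0 lam"

definition marginal_revenue :: "real \<Rightarrow> real \<Rightarrow> real \<Rightarrow> real \<Rightarrow> real" where
  "marginal_revenue Bi yi Bj yj = R0 *
     (lam * rateS Nf R0 lam yi yj powr - \<alpha> - rateM Nm R0 Bi Bj yi yj powr - \<alpha>
      - \<alpha> * lam\<^sup>2 * yi * R0 / Nf * rateS Nf R0 lam yi yj powr (- \<alpha> - 1)
      + \<alpha> * (Bi - yi) * R0 / Nm * rateM Nm R0 Bi Bj yi yj powr (- \<alpha> - 1))"

lemma payoff_deriv:
  assumes "0 < rateM Nm R0 Bi Bj yi yj" "0 < rateS Nf R0 lam yi yj"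
  shows "DERIV (\<lambda>y. payoff Bi y Bj yj) yi :> marginal_revenue Bi yi Bj yj"
  unfolding revenue_eq marginal_revenue_def using assms Nm_pos Nf_pos unfolding rateM_def rateS_def
  by (auto intro!: derivative_eq_intros simp: power2_eq_square field_simps)

lemma marginal_revenue_cournot:
  "marginal_revenue Bi yi Bj yj = R0 *
     (lam * cournot_marginal \<alpha> (rateS Nf R0 lam yi yj) (lam * yi * R0 / Nf)
      - cournot_marginal \<alpha> (rateM Nm R0 Bi Bj yi yj) ((Bi - yi) * R0 / Nm))"
  by (simp add: marginal_revenue_def cournot_marginal_def power2_eq_square algebra_simps)

lemma marginal_revenue_sum:
  assumes "0 < x1 + x2" "x1 + x2 < C1 + C2"
  shows "marginal_revenue C1 x1 C2 x2 + marginal_revenue C2 x2 C1 x1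
           = (2 - \<alpha>) * R0 * welfare_slope (C1 + C2) (x1 + x2)"
proof -
  define S M where "S = lam * (x1 + x2) * R0 / Nf" and "M = (C1 + C2 - (x1 + x2)) * R0 / Nm"
  have "0 < S" "0 < M" using assms Nf_pos Nm_pos R0_pos lam_pos by (simp_all add: S_def M_def)
  have rates: "rateS Nf R0 lam x1 x2 = S" "rateS Nf R0 lam x2 x1 = S"
    "rateM Nm R0 C1 C2 x1 x2 = M" "rateM Nm R0 C2 C1 x2 x1 = M"
    by (simp_all add: rateS_def rateM_def S_def M_def algebra_simps)
  have sum_S: "cournot_marginal \<alpha> S (lam * x1 * R0 / Nf) + cournot_marginal \<alpha> S (lam * x2 * R0 / Nf)
      = (2 - \<alpha>) * S powr - \<alpha>"
    using \<open>0 < S\<close> by (intro cournot_marginal_sum) (simp_all add: S_def add_divide_distrib algebra_simps)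
  have sum_M: "cournot_marginal \<alpha> M ((C1 - x1) * R0 / Nm) + cournot_marginal \<alpha> M ((C2 - x2) * R0 / Nm)
      = (2 - \<alpha>) * M powr - \<alpha>"
    using \<open>0 < M\<close> Nm_pos by (intro cournot_marginal_sum) (simp_all add: M_def field_simps)
  have "marginal_revenue C1 x1 C2 x2 + marginal_revenue C2 x2 C1 x1 =
      R0 * (lam * (cournot_marginal \<alpha> S (lam * x1 * R0 / Nf) + cournot_marginal \<alpha> S (lam * x2 * R0 / Nf))
        - (cournot_marginal \<alpha> M ((C1 - x1) * R0 / Nm) + cournot_marginal \<alpha> M ((C2 - x2) * R0 / Nm)))"
    unfolding marginal_revenue_cournot rates by (simp add: algebra_simps)
  also have "\<dots> = (2 - \<alpha>) * R0 * (lam * S powr - \<alpha> - M powr - \<alpha>)"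
    unfolding sum_S sum_M by (simp add: algebra_simps)
  finally show ?thesis by (simp add: welfare_slope_def S_def M_def)
qed

lemma marginal_revenue_proportional:
  assumes "0 < C1" "0 < C2" "0 < r" "r < 1"
  shows "marginal_revenue C1 (r * C1) C2 (r * C2)
           = (1 - \<alpha> * (C1 / (C1 + C2))) * R0 * welfare_slope (C1 + C2) (r * (C1 + C2))"
proof -
  define kS kM where "kS = lam * r * R0 / Nf" and "kM = (1 - r) * R0 / Nm"
  define S M where "S = (C1 + C2) * kS" and "M = (C1 + C2) * kM"
  define w where "w = C1 / (C1 + C2)"
  have "0 < S" "0 < M" using assms Nf_pos Nm_pos R0_pos lam_pos by (simp_all add: S_def M_def kS_def kM_def)
  have "C1 + C2 \<noteq> 0" using assms by simp
  then have "w * S = C1 * kS" "w * M = C1 * kM"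
    by (simp_all add: w_def S_def M_def)
  then have "lam * (r * C1) * R0 / Nf = w * S" "(C1 - r * C1) * R0 / Nm = w * M"
    by (simp_all add: kS_def kM_def algebra_simps)
  moreover have "rateS Nf R0 lam (r * C1) (r * C2) = S" "rateM Nm R0 C1 C2 (r * C1) (r * C2) = M"
    by (simp_all add: rateS_def rateM_def S_def M_def kS_def kM_def algebra_simps)
  ultimately have "marginal_revenue C1 (r * C1) C2 (r * C2)
      = R0 * (lam * cournot_marginal \<alpha> S (w * S) - cournot_marginal \<alpha> M (w * M))"
    unfolding marginal_revenue_cournot by simp
  also have "\<dots> = (1 - \<alpha> * w) * R0 * (lam * S powr - \<alpha> - M powr - \<alpha>)"
    unfolding cournot_marginal_proportional[OF \<open>0 < S\<close>] cournot_marginal_proportional[OF \<open>0 < M\<close>]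
    by (simp add: algebra_simps)
  also have "lam * S powr - \<alpha> - M powr - \<alpha> = welfare_slope (C1 + C2) (r * (C1 + C2))"
    by (simp add: welfare_slope_def S_def M_def kS_def kM_def algebra_simps)
  finally show ?thesis by (simp add: w_def)
qed

lemma marginal_revenue_strictly_monotone:
  assumes x: "0 \<le> x1" "x1 \<le> C1" "0 \<le> x2" "x2 \<le> C2" "0 < x1 + x2" "x1 + x2 < C1 + C2"
    and z: "0 \<le> z1" "z1 \<le> C1" "0 \<le> z2" "z2 \<le> C2" "0 < z1 + z2" "z1 + z2 < C1 + C2"
    and ne: "x1 \<noteq> z1 \<or> x2 \<noteq> z2"
  shows "(x1 - z1) * (marginal_revenue C1 x1 C2 x2 - marginal_revenue C1 z1 C2 z2)
       + (x2 - z2) * (marginal_revenue C2 x2 C1 x1 - marginal_revenue C2 z2 C1 z1) < 0"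
proof -
  \<comment> \<open>the small-cell part is Cournot-monotone in \<open>q x\<^sub>i\<close>, the macro-cell part in \<open>p (C\<^sub>i - x\<^sub>i)\<close>\<close>
  define p q where "p = R0 / Nm" and "q = lam * R0 / Nf"
  have "0 < p" "0 < q" using Nm_pos Nf_pos R0_pos lam_pos by (simp_all add: p_def q_def)
  let ?cm = "cournot_marginal \<alpha>"
  have rates: "rateS Nf R0 lam y1 y2 = q * y1 + q * y2" "rateS Nf R0 lam y2 y1 = q * y1 + q * y2"
    "rateM Nm R0 C1 C2 y1 y2 = p * (C1 - y1) + p * (C2 - y2)"
    "rateM Nm R0 C2 C1 y2 y1 = p * (C1 - y1) + p * (C2 - y2)"
    "lam * y1 * R0 / Nf = q * y1" "lam * y2 * R0 / Nf = q * y2"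
    "(C1 - y1) * R0 / Nm = p * (C1 - y1)" "(C2 - y2) * R0 / Nm = p * (C2 - y2)" for y1 y2
    using Nm_pos Nf_pos by (simp_all add: rateS_def rateM_def p_def q_def field_simps)
  have mr: "marginal_revenue C1 y1 C2 y2 =
        R0 * (lam * ?cm (q * y1 + q * y2) (q * y1) - ?cm (p * (C1 - y1) + p * (C2 - y2)) (p * (C1 - y1)))"
    "marginal_revenue C2 y2 C1 y1 =
        R0 * (lam * ?cm (q * y1 + q * y2) (q * y2) - ?cm (p * (C1 - y1) + p * (C2 - y2)) (p * (C2 - y2)))"
    for y1 y2
    unfolding marginal_revenue_cournot rates by (simp_all add: add.commute[of "q * y2"])
  have ne_scaled: "q * z1 \<noteq> q * x1 \<or> q * z2 \<noteq> q * x2"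
    "p * (C1 - z1) \<noteq> p * (C1 - x1) \<or> p * (C2 - z2) \<noteq> p * (C2 - x2)"
    using ne \<open>0 < p\<close> \<open>0 < q\<close> by auto
  define X where "X = (x1 - z1) * (?cm (q * x1 + q * x2) (q * x1) - ?cm (q * z1 + q * z2) (q * z1))
                     + (x2 - z2) * (?cm (q * x1 + q * x2) (q * x2) - ?cm (q * z1 + q * z2) (q * z2))"
  define Y where "Y = (x1 - z1) * (?cm (p * (C1 - x1) + p * (C2 - x2)) (p * (C1 - x1))
                                    - ?cm (p * (C1 - z1) + p * (C2 - z2)) (p * (C1 - z1)))
                     + (x2 - z2) * (?cm (p * (C1 - x1) + p * (C2 - x2)) (p * (C2 - x2))
                                    - ?cm (p * (C1 - z1) + p * (C2 - z2)) (p * (C2 - z2)))"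
  have "(q * x1 - q * z1) * (?cm (q * x1 + q * x2) (q * x1) - ?cm (q * z1 + q * z2) (q * z1))
      + (q * x2 - q * z2) * (?cm (q * x1 + q * x2) (q * x2) - ?cm (q * z1 + q * z2) (q * z2)) < 0"
    using x z \<open>0 < q\<close>
    by (intro cournot_marginal_strictly_monotone[OF alpha _ _ _ _ _ _ ne_scaled(1)])
       (simp_all flip: distrib_left)
  then have "q * X < 0" by (simp add: X_def algebra_simps)
  then have "X < 0" using \<open>0 < q\<close> by (simp add: mult_less_0_iff)
  have "(p * (C1 - x1) - p * (C1 - z1)) * (?cm (p * (C1 - x1) + p * (C2 - x2)) (p * (C1 - x1))
                                          - ?cm (p * (C1 - z1) + p * (C2 - z2)) (p * (C1 - z1)))
      + (p * (C2 - x2) - p * (C2 - z2)) * (?cm (p * (C1 - x1) + p * (C2 - x2)) (p * (C2 - x2))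
                                          - ?cm (p * (C1 - z1) + p * (C2 - z2)) (p * (C2 - z2))) < 0"
    using x z \<open>0 < p\<close>
    by (intro cournot_marginal_strictly_monotone[OF alpha _ _ _ _ _ _ ne_scaled(2)])
       (simp_all flip: distrib_left)
  then have "- (p * Y) < 0" by (simp add: Y_def algebra_simps)
  then have "0 < Y" using \<open>0 < p\<close> by (simp add: zero_less_mult_iff)
  have "(x1 - z1) * (marginal_revenue C1 x1 C2 x2 - marginal_revenue C1 z1 C2 z2)
      + (x2 - z2) * (marginal_revenue C2 x2 C1 x1 - marginal_revenue C2 z2 C1 z1) = R0 * (lam * X - Y)"
    unfolding mr X_def Y_def by (simp add: algebra_simps)
  also have "\<dots> < 0"
  proof -
    have "lam * X < 0" using \<open>X < 0\<close> lam_pos by (simp add: mult_pos_neg)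
    then show ?thesis using \<open>0 < Y\<close> R0_pos by (simp add: mult_pos_neg)
  qed
  finally show ?thesis .
qed

text \<open>The bounds on the aggregate keep both rates positive, so the marginal revenues are
  genuine derivatives of the payoffs.\<close>
definition stationary :: "real \<Rightarrow> real \<Rightarrow> real \<Rightarrow> real \<Rightarrow> real \<Rightarrow> real \<Rightarrow> bool" where
  "stationary C1 C2 L1 L2 x1 x2 \<longleftrightarrow> 0 < x1 + x2 \<and> x1 + x2 < C1 + C2
     \<and> kkt_interval L1 C1 x1 (marginal_revenue C1 x1 C2 x2)
     \<and> kkt_interval L2 C2 x2 (marginal_revenue C2 x2 C1 x1)"

lemma payoff_gain_leaving_saturation:
  assumes "0 \<le> L1" "L1 < C1" "0 \<le> C2"
  shows "\<exists>y\<in>{L1..C1}. payoff C1 C1 C2 C2 < payoff C1 y C2 C2"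
proof -
  define G where "G h = R0 * lam * (C1 - h) * (lam * (C1 - h + C2) * R0 / Nf) powr - \<alpha>" for h
  define c where "c = R0 * (R0 / Nm) powr - \<alpha>"
  have "0 < c" using R0_pos Nm_pos by (simp add: c_def)
  have "\<exists>D. DERIV G 0 :> D"
    unfolding G_def using assms Nf_pos R0_pos lam_pos by (intro exI) (auto intro!: derivative_eq_intros)
  then obtain h where h: "0 < h" "h < C1 - L1" "G 0 < c * h powr (1 - \<alpha>) + G h"
    using power_gain_beats_differentiable_loss[OF _ \<open>0 < c\<close>, of G _ "1 - \<alpha>" "C1 - L1"] alpha assms
    by auto
  have "payoff C1 C1 C2 C2 = G 0"
    by (simp add: revenue_eq rateS_def G_def)
  moreover have "payoff C1 (C1 - h) C2 C2 = c * h powr (1 - \<alpha>) + G h"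
    using mult_scaled_powr_neg[OF h(1), of "R0 / Nm" \<alpha>] R0_pos Nm_pos
    by (simp add: revenue_eq rateM_def rateS_def G_def c_def algebra_simps)
  ultimately show ?thesis using h by (intro bexI[of _ "C1 - h"]) auto
qed

lemma payoff_gain_entering_small_cells:
  assumes "0 < C1" "0 \<le> C2"
  shows "\<exists>y\<in>{0..C1}. payoff C1 0 C2 0 < payoff C1 y C2 0"
proof -
  define G where "G h = R0 * (C1 - h) * ((C1 - h + C2) * R0 / Nm) powr - \<alpha>" for h
  define c where "c = R0 * lam * (lam * R0 / Nf) powr - \<alpha>"
  have "0 < c" using R0_pos Nf_pos lam_pos by (simp add: c_def)
  have "\<exists>D. DERIV G 0 :> D"
    unfolding G_def using assms Nm_pos R0_pos by (intro exI) (auto intro!: derivative_eq_intros)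
  then obtain h where h: "0 < h" "h < C1" "G 0 < c * h powr (1 - \<alpha>) + G h"
    using power_gain_beats_differentiable_loss[OF _ \<open>0 < c\<close>, of G _ "1 - \<alpha>" C1] alpha assms
    by auto
  have "payoff C1 0 C2 0 = G 0"
    by (simp add: revenue_eq rateM_def G_def)
  moreover have "payoff C1 h C2 0 = c * h powr (1 - \<alpha>) + G h"
    using mult_scaled_powr_neg[OF h(1), of "lam * R0 / Nf" \<alpha>] R0_pos Nf_pos lam_pos
    by (simp add: revenue_eq rateM_def rateS_def G_def c_def algebra_simps)
  ultimately show ?thesis using h by (intro bexI[of _ h]) auto
qed

lemma NE_stationary:
  assumes L: "0 \<le> L1" "L1 < C1" "0 \<le> L2" "L2 < C2" and NE: "NE C1 C2 L1 L2 x1 x2"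
  shows "stationary C1 C2 L1 L2 x1 x2"
proof -
  have x: "L1 \<le> x1" "x1 \<le> C1" "L2 \<le> x2" "x2 \<le> C2"
    and best1: "\<forall>y\<in>{L1..C1}. payoff C1 y C2 x2 \<le> payoff C1 x1 C2 x2"
    and best2: "\<forall>y\<in>{L2..C2}. payoff C2 y C1 x1 \<le> payoff C2 x2 C1 x1"
    using NE unfolding is_NE_def by auto
  have below: "x1 + x2 < C1 + C2"
  proof (rule ccontr)
    assume "\<not> x1 + x2 < C1 + C2"
    then have "x1 = C1" "x2 = C2" using x by auto
    then show False
      using payoff_gain_leaving_saturation[of L1 C1 C2] best1 L by fastforce
  qed
  have above: "0 < x1 + x2"
  proof (rule ccontr)
    assume "\<not> 0 < x1 + x2"
    then have "x1 = 0" "x2 = 0" "L1 = 0" using x L by auto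
    then show False
      using payoff_gain_entering_small_cells[of C1 C2] best1 L by fastforce
  qed
  have rates: "0 < rateM Nm R0 C1 C2 x1 x2" "0 < rateS Nf R0 lam x1 x2"
    "0 < rateM Nm R0 C2 C1 x2 x1" "0 < rateS Nf R0 lam x2 x1"
    using above below Nm_pos Nf_pos R0_pos lam_pos by (simp_all add: rateM_def rateS_def)
  show ?thesis
    unfolding stationary_def
    using kkt_interval_if_maximum[OF payoff_deriv[OF rates(1,2)] x(1,2) best1]
      kkt_interval_if_maximum[OF payoff_deriv[OF rates(3,4)] x(3,4) best2] above below
    by blast
qed

lemma stationary_unique:
  assumes "0 \<le> L1" "0 \<le> L2"
    and x: "stationary C1 C2 L1 L2 x1 x2" and z: "stationary C1 C2 L1 L2 z1 z2"
  shows "x1 = z1 \<and> x2 = z2"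
proof (rule ccontr)
  assume "\<not> (x1 = z1 \<and> x2 = z2)"
  then have "(x1 - z1) * (marginal_revenue C1 x1 C2 x2 - marginal_revenue C1 z1 C2 z2)
      + (x2 - z2) * (marginal_revenue C2 x2 C1 x1 - marginal_revenue C2 z2 C1 z1) < 0"
    using assms by (intro marginal_revenue_strictly_monotone) (auto simp: stationary_def kkt_interval_def)
  moreover have "0 \<le> (x1 - z1) * (marginal_revenue C1 x1 C2 x2 - marginal_revenue C1 z1 C2 z2)"
    "0 \<le> (x2 - z2) * (marginal_revenue C2 x2 C1 x1 - marginal_revenue C2 z2 C1 z1)"
    using x z unfolding stationary_def by (auto intro: kkt_interval_monotone)
  ultimately show False by linarith
qed

lemma marginal_revenue_opt_share:
  assumes "0 < C1" "0 < C2"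
  shows "marginal_revenue C1 (opt_share * C1) C2 (opt_share * C2) = 0"
  using marginal_revenue_proportional[OF assms opt_share_bounds] welfare_slope_opt_share assms
  by (simp add: mult.commute)

lemma stationary_at_opt_share:
  assumes L: "0 \<le> L1" "L1 < C1" "0 \<le> L2" "L2 < C2"
    and x: "stationary C1 C2 L1 L2 x1 x2" and opt: "x1 + x2 = opt_share * (C1 + C2)"
  shows "x1 = opt_share * C1 \<and> x2 = opt_share * C2"
proof (rule ccontr)
  define z1 z2 where "z1 = opt_share * C1" and "z2 = opt_share * C2"
  define m1 m2 where "m1 = marginal_revenue C1 x1 C2 x2" and "m2 = marginal_revenue C2 x2 C1 x1"
  assume ne: "\<not> (x1 = opt_share * C1 \<and> x2 = opt_share * C2)"
  have kkt: "kkt_interval L1 C1 x1 m1" "kkt_interval L2 C2 x2 m2"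
    and agg: "0 < x1 + x2" "x1 + x2 < C1 + C2"
    using x by (simp_all add: stationary_def m1_def m2_def)
  have z: "0 \<le> z1" "z1 \<le> C1" "0 \<le> z2" "z2 \<le> C2" "0 < z1 + z2" "z1 + z2 < C1 + C2"
    using L opt_share_bounds by (simp_all add: z1_def z2_def mult_le_cancel_right1 flip: distrib_left)
  have mz: "marginal_revenue C1 z1 C2 z2 = 0" "marginal_revenue C2 z2 C1 z1 = 0"
    using marginal_revenue_opt_share[of C1 C2] marginal_revenue_opt_share[of C2 C1] L
    by (simp_all add: z1_def z2_def)
  have "m1 + m2 = 0"
    using marginal_revenue_sum[OF agg] welfare_slope_opt_share[of "C1 + C2"] opt L
    by (simp add: m1_def m2_def)
  have "(x1 - z1) * m1 + (x2 - z2) * m2 < 0"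
    using marginal_revenue_strictly_monotone[of x1 C1 x2 C2 z1 z2] kkt agg z ne L mz
    unfolding m1_def m2_def z1_def z2_def kkt_interval_def by auto
  moreover have "(x2 - z2) * m2 = (x1 - z1) * m1"
  proof -
    have dx: "x2 - z2 = - (x1 - z1)" using opt by (simp add: z1_def z2_def algebra_simps)
    have dm: "m2 = - m1" using \<open>m1 + m2 = 0\<close> by simp
    show ?thesis unfolding dx dm by (simp add: right_diff_distrib left_diff_distrib)
  qed
  moreover have "0 \<le> (x1 - z1) * m1"
  proof (cases "z1 < x1")
    case True
    then have "x2 < C2" using opt z by (simp add: z1_def z2_def algebra_simps)
    then show ?thesis using True kkt \<open>m1 + m2 = 0\<close> by (simp add: kkt_interval_def)
  next
    case False
    then have "x1 < C1 \<or> x1 = z1" using z by auto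
    then show ?thesis using False kkt by (auto simp: kkt_interval_def intro: mult_nonpos_nonpos)
  qed
  ultimately show False by linarith
qed

lemma opt_welfare_eqI:
  assumes "w1 \<in> {L1..C1}" "w2 \<in> {L2..C2}"
    and "\<And>s. L1 + L2 \<le> s \<Longrightarrow> s \<le> C1 + C2 \<Longrightarrow> agg_welfare (C1 + C2) s \<le> agg_welfare (C1 + C2) (w1 + w2)"
  shows "opt_welfare C1 C2 L1 L2 = welfare C1 C2 w1 w2"
  using assms by (intro optSW_eqI) (auto simp: welfare_eq_agg_welfare)

lemma opt_welfare_unconstrained:
  assumes "0 < C1" "0 < C2"
  shows "opt_welfare C1 C2 0 0 = welfare C1 C2 (opt_share * C1) (opt_share * C2)"
  using assms opt_share_bounds agg_welfare_max_at_opt_share[of _ "C1 + C2"]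
  by (intro opt_welfare_eqI) (auto simp: mult_le_cancel_right1 distrib_left intro: less_imp_le)

lemma welfare_binding_lower_bounds:
  assumes L: "0 \<le> L1" "L1 < C1" "0 \<le> L2" "L2 < C2"
    and large: "opt_share * (C1 + C2) < L1 + L2" and NE: "NE C1 C2 L1 L2 x1 x2"
  shows "welfare C1 C2 x1 x2 \<le> opt_welfare C1 C2 L1 L2
    \<and> opt_welfare C1 C2 L1 L2 < opt_welfare C1 C2 0 0
    \<and> (welfare C1 C2 x1 x2 = opt_welfare C1 C2 L1 L2 \<longleftrightarrow>
         marginal_revenue C1 L1 C2 L2 \<le> 0 \<and> marginal_revenue C2 L2 C1 L1 \<le> 0)"
proof -
  define C where "C = C1 + C2"
  have st: "stationary C1 C2 L1 L2 x1 x2" by (rule NE_stationary[OF L NE])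
  then have x: "L1 \<le> x1" "x1 \<le> C1" "L2 \<le> x2" "x2 \<le> C2" by (auto simp: stationary_def kkt_interval_def)
  have below_L: "agg_welfare C s < agg_welfare C (L1 + L2)" if "L1 + L2 \<le> s" "s \<le> C" "s \<noteq> L1 + L2" for s
    using agg_welfare_max_at_lower_bound[OF large[folded C_def]] that L by (simp add: C_def)
  have opt_L: "opt_welfare C1 C2 L1 L2 = welfare C1 C2 L1 L2"
    using L below_L by (intro opt_welfare_eqI) (auto simp: C_def intro: less_imp_le)
  have opt_0: "opt_welfare C1 C2 0 0 = welfare C1 C2 (opt_share * C1) (opt_share * C2)"
    using L by (intro opt_welfare_unconstrained) auto
  have "welfare C1 C2 L1 L2 < welfare C1 C2 (opt_share * C1) (opt_share * C2)"
    using agg_welfare_max_at_opt_share[of "L1 + L2" C] L large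
    by (simp add: welfare_eq_agg_welfare C_def distrib_left)
  moreover have "welfare C1 C2 x1 x2 = welfare C1 C2 L1 L2 \<longleftrightarrow> x1 = L1 \<and> x2 = L2"
    using below_L[of "x1 + x2"] x by (fastforce simp: welfare_eq_agg_welfare C_def)
  moreover have "x1 = L1 \<and> x2 = L2 \<longleftrightarrow>
      marginal_revenue C1 L1 C2 L2 \<le> 0 \<and> marginal_revenue C2 L2 C1 L1 \<le> 0"
  proof
    assume "x1 = L1 \<and> x2 = L2"
    then show "marginal_revenue C1 L1 C2 L2 \<le> 0 \<and> marginal_revenue C2 L2 C1 L1 \<le> 0"
      using st L by (simp add: stationary_def kkt_interval_lower_iff)
  next
    assume "marginal_revenue C1 L1 C2 L2 \<le> 0 \<and> marginal_revenue C2 L2 C1 L1 \<le> 0"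
    moreover have "0 < L1 + L2" using large L opt_share_bounds by (smt (verit) mult_pos_pos)
    ultimately have "stationary C1 C2 L1 L2 L1 L2"
      using L by (simp add: stationary_def kkt_interval_lower_iff)
    then show "x1 = L1 \<and> x2 = L2" using stationary_unique[OF L(1,3) st] by blast
  qed
  moreover have "welfare C1 C2 x1 x2 \<le> welfare C1 C2 L1 L2"
    using below_L[of "x1 + x2"] x by (cases "x1 + x2 = L1 + L2") (auto simp: welfare_eq_agg_welfare C_def)
  ultimately show ?thesis unfolding opt_L opt_0 by auto
qed

lemma welfare_slack_lower_bounds:
  assumes L: "0 \<le> L1" "L1 < C1" "0 \<le> L2" "L2 < C2"
    and small: "L1 + L2 \<le> opt_share * (C1 + C2)" and NE: "NE C1 C2 L1 L2 x1 x2"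
  shows "welfare C1 C2 x1 x2 \<le> opt_welfare C1 C2 L1 L2
    \<and> opt_welfare C1 C2 L1 L2 = opt_welfare C1 C2 0 0
    \<and> (welfare C1 C2 x1 x2 = opt_welfare C1 C2 0 0 \<longleftrightarrow> L1 \<le> opt_share * C1 \<and> L2 \<le> opt_share * C2)"
proof -
  define C z1 z2 where "C = C1 + C2" and "z1 = opt_share * C1" and "z2 = opt_share * C2"
  have st: "stationary C1 C2 L1 L2 x1 x2" by (rule NE_stationary[OF L NE])
  then have x: "L1 \<le> x1" "x1 \<le> C1" "L2 \<le> x2" "x2 \<le> C2" by (auto simp: stationary_def kkt_interval_def)
  have opt_0: "opt_welfare C1 C2 0 0 = welfare C1 C2 z1 z2"
    unfolding z1_def z2_def using L by (intro opt_welfare_unconstrained) auto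
  have agg_z: "z1 + z2 = opt_share * C" by (simp add: z1_def z2_def C_def distrib_left)
  have below_opt: "agg_welfare C s \<le> agg_welfare C (opt_share * C)" if "0 \<le> s" "s \<le> C" for s
    using agg_welfare_max_at_opt_share[OF that] by (cases "s = opt_share * C") auto
  \<comment> \<open>a profile in the constrained box whose aggregate is the unconstrained optimum\<close>
  define t where "t = (opt_share * C - (L1 + L2)) / (C - (L1 + L2))"
  have "0 \<le> t" "t \<le> 1"
    using small L opt_share_bounds by (auto simp: t_def C_def divide_le_eq_1 mult_le_cancel_right1)
  define w1 w2 where "w1 = L1 + t * (C1 - L1)" and "w2 = L2 + t * (C2 - L2)"
  have "0 \<le> t * (C1 - L1)" "t * (C1 - L1) \<le> C1 - L1" "0 \<le> t * (C2 - L2)" "t * (C2 - L2) \<le> C2 - L2"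
    using \<open>0 \<le> t\<close> \<open>t \<le> 1\<close> L by (auto intro: mult_left_le_one_le)
  then have "w1 \<in> {L1..C1}" "w2 \<in> {L2..C2}" by (auto simp: w1_def w2_def)
  moreover have "w1 + w2 = opt_share * C"
  proof -
    have "C - (L1 + L2) \<noteq> 0" using L by (simp add: C_def)
    then have "t * (C - (L1 + L2)) = opt_share * C - (L1 + L2)" by (simp add: t_def)
    then show ?thesis by (simp add: w1_def w2_def C_def algebra_simps)
  qed
  ultimately have opt_L: "opt_welfare C1 C2 L1 L2 = welfare C1 C2 z1 z2"
    using below_opt L by (subst opt_welfare_eqI[of w1 L1 C1 w2 L2 C2])
      (auto simp: welfare_eq_agg_welfare agg_z C_def)
  have "welfare C1 C2 x1 x2 = welfare C1 C2 z1 z2 \<longleftrightarrow> x1 + x2 = opt_share * C"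
    using agg_welfare_max_at_opt_share[of "x1 + x2" C] x L
    by (fastforce simp: welfare_eq_agg_welfare agg_z C_def)
  moreover have "x1 + x2 = opt_share * C \<longleftrightarrow> L1 \<le> z1 \<and> L2 \<le> z2"
  proof
    assume "x1 + x2 = opt_share * C"
    then show "L1 \<le> z1 \<and> L2 \<le> z2"
      using stationary_at_opt_share[OF L st] x by (simp add: C_def z1_def z2_def)
  next
    assume "L1 \<le> z1 \<and> L2 \<le> z2"
    then have "stationary C1 C2 L1 L2 z1 z2"
      using L opt_share_bounds marginal_revenue_opt_share[of C1 C2] marginal_revenue_opt_share[of C2 C1]
      by (auto simp: stationary_def kkt_interval_def z1_def z2_def mult_le_cancel_right1
          simp flip: distrib_left)
    then show "x1 + x2 = opt_share * C" using stationary_unique[OF L(1,3) st] agg_z by simp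
  qed
  moreover have "welfare C1 C2 x1 x2 \<le> welfare C1 C2 z1 z2"
    using below_opt[of "x1 + x2"] x L by (simp add: welfare_eq_agg_welfare agg_z C_def)
  ultimately show ?thesis unfolding opt_L opt_0 z1_def z2_def by auto
qed

end

theorem theorem6:
  fixes \<alpha> Nm Nf R0 lam Bo1 Bo2 B Bn1 Bn2 x1 x2 :: real
  assumes "0 < \<alpha>" "\<alpha> < 1" "Nm > 0" "Nf > 0" "R0 > 0" "lam > 1"
    and "Bo1 > 0" "Bo2 > 0" "B \<ge> 0" "Bn1 \<ge> 0" "Bn2 \<ge> 0" "Bn1 + Bn2 = B"
    and NE: "is_NE \<alpha> Nm Nf R0 lam (Bo1 + Bn1) (Bo2 + Bn2) Bn1 Bn2 x1 x2"
  defines "\<epsilon> \<equiv> lam powr (1 / \<alpha> - 1)"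
    and "T \<equiv> (Bo1 + Bo2) * Nf * lam powr (1 / \<alpha> - 1) / Nm"
    and "SWne \<equiv> SW \<alpha> Nm Nf R0 lam (Bo1 + Bn1) (Bo2 + Bn2) x1 x2"
    and "SWw \<equiv> optSW \<alpha> Nm Nf R0 lam (Bo1 + Bn1) (Bo2 + Bn2) Bn1 Bn2"
    and "SWwo \<equiv> optSW \<alpha> Nm Nf R0 lam (Bo1 + Bn1) (Bo2 + Bn2) 0 0"
    and "RS0 \<equiv> lam * (Bn1 + Bn2) * R0 / Nf"
    and "RM0 \<equiv> (Bo1 + Bo2) * R0 / Nm"
  shows "(B > T \<longrightarrow>
            SWne \<le> SWw \<and> SWw < SWwo \<and>
            (SWne = SWw \<longleftrightarrow>
               (lam * RS0 powr (- \<alpha>) - RM0 powr (- \<alpha>)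
                  - \<alpha> * lam\<^sup>2 * Bn1 * R0 / Nf * RS0 powr (- \<alpha> - 1)
                  + \<alpha> * Bo1 * R0 / Nm * RM0 powr (- \<alpha> - 1) \<le> 0) \<and>
               (lam * RS0 powr (- \<alpha>) - RM0 powr (- \<alpha>)
                  - \<alpha> * lam\<^sup>2 * Bn2 * R0 / Nf * RS0 powr (- \<alpha> - 1)
                  + \<alpha> * Bo2 * R0 / Nm * RM0 powr (- \<alpha> - 1) \<le> 0)))
       \<and> (B \<le> T \<longrightarrow>
            SWne \<le> SWw \<and> SWw = SWwo \<and>
            (SWne = SWwo \<longleftrightarrow>
               Bn1 \<in> {B - Bo2 * Nf * \<epsilon> / Nm .. Bo1 * Nf * \<epsilon> / Nm} \<and> Bn2 = B - Bn1))"
proof -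
  interpret bandwidth_market \<alpha> Nm Nf R0 lam using assms by unfold_locales auto
  define C1 C2 where "C1 = Bo1 + Bn1" and "C2 = Bo2 + Bn2"
  have L: "0 \<le> Bn1" "Bn1 < C1" "0 \<le> Bn2" "Bn2 < C2" using assms by (simp_all add: C1_def C2_def)
  have NE': "NE C1 C2 Bn1 Bn2 x1 x2" using NE by (simp add: C1_def C2_def)
  have eps: "\<epsilon> = eps" by (simp add: \<epsilon>_def eps_def)
  have large_iff: "T < B \<longleftrightarrow> opt_share * (C1 + C2) < Bn1 + Bn2"
    using le_opt_share_iff[of B "Bo1 + Bo2"] assms(12)
    by (auto simp: T_def eps_def C1_def C2_def not_le[symmetric] ac_simps)
  have rates: "rateS Nf R0 lam Bn1 Bn2 = RS0" "rateS Nf R0 lam Bn2 Bn1 = RS0"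
    "rateM Nm R0 C1 C2 Bn1 Bn2 = RM0" "rateM Nm R0 C2 C1 Bn2 Bn1 = RM0" "C1 - Bn1 = Bo1" "C2 - Bn2 = Bo2"
    by (simp_all add: rateS_def rateM_def RS0_def RM0_def C1_def C2_def algebra_simps)
  have marginal_iff:
    "marginal_revenue C1 Bn1 C2 Bn2 \<le> 0 \<longleftrightarrow> lam * RS0 powr (- \<alpha>) - RM0 powr (- \<alpha>)
       - \<alpha> * lam\<^sup>2 * Bn1 * R0 / Nf * RS0 powr (- \<alpha> - 1) + \<alpha> * Bo1 * R0 / Nm * RM0 powr (- \<alpha> - 1) \<le> 0"
    "marginal_revenue C2 Bn2 C1 Bn1 \<le> 0 \<longleftrightarrow> lam * RS0 powr (- \<alpha>) - RM0 powr (- \<alpha>)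
       - \<alpha> * lam\<^sup>2 * Bn2 * R0 / Nf * RS0 powr (- \<alpha> - 1) + \<alpha> * Bo2 * R0 / Nm * RM0 powr (- \<alpha> - 1) \<le> 0"
    unfolding marginal_revenue_def rates using assms(5) by (simp_all add: mult_le_0_iff)
  have small_iff: "Bn1 \<in> {B - Bo2 * Nf * \<epsilon> / Nm .. Bo1 * Nf * \<epsilon> / Nm} \<and> Bn2 = B - Bn1
      \<longleftrightarrow> Bn1 \<le> opt_share * C1 \<and> Bn2 \<le> opt_share * C2"
    using le_opt_share_iff[of Bn1 Bo1] le_opt_share_iff[of Bn2 Bo2] assms(12)
    by (auto simp: C1_def C2_def eps ac_simps)
  have SW_C: "SWne = welfare C1 C2 x1 x2" "SWw = opt_welfare C1 C2 Bn1 Bn2" "SWwo = opt_welfare C1 C2 0 0"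
    by (simp_all add: SWne_def SWw_def SWwo_def C1_def C2_def)
  show ?thesis
  proof (cases "T < B")
    case True
    then show ?thesis
      using welfare_binding_lower_bounds[OF L _ NE'] large_iff unfolding SW_C marginal_iff by auto
  next
    case False
    then show ?thesis
      using welfare_slack_lower_bounds[OF L _ NE'] large_iff unfolding SW_C small_iff by auto
  qed
qed

end
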